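(* Assume the linear model $X_a=X^a\theta^0_a+\epsilon_a$. On the event $\Lambda_a$, if $\lambda\ge2\lambda_0$ and $\mu\ge2\mu_0$, then $$\frac2n\|X^a(\hat\theta^{\lambda,\mu}_a-\theta^0_a)\|_2^2+(\lambda-3B\mu)\|\hat\theta^{\lambda,\mu}_{a,S_0^c}\|_1\le(3\lambda+5B\mu)\|\hat\theta^{\lambda,\mu}_{a,S_0}-\theta^0_{a,S_0}\|_1.$$
   Context: Fix a node $a$. $X_a\in\mathbb{R}^n$ is the observed $a$-th variable, $X^a$ the $n\times p$ observation matrix with $a$-th column set to zero, $X^a_j$ its $j$-th column, $\theta^0_a$ the true coefficient vector, $\epsilon_a$ the noise. $S_0=\{j:\theta^0_{a,j}\neq0\}$. For $S\subseteq\{1,\dots,p\}$ and $\theta\in\mathbb{R}^p$, $\theta_S$ is the vector with entries $\theta_j\mathbf{1}\{j\in S\}$, and $\theta_{S^c}$ has entries $\theta_j\mathbf{1}\{j\notin S\}$. The local difference matrix $D^a$: from a known local neighborhood graph with edge set $E_{\rm local}$, $D$ has a row $e_i-e_j$ per edge $\{i,j\}$, $i<j$, and $D^a$ keeps rows with $a$-th entry $0$. $B$ bounds the number of nonzero entries in any column of $D^a$. $\hat\theta^{\lambda,\mu}_a=\operatorname{argmin}_{\theta_a}\big[\frac1n\|X_a-X^a\theta_a\|_2^2+\lambda\|\theta_a\|_1+\mu\|D^a\theta_a\|_1\big]$. For $\lambda_0,\mu_0>0$, $\Lambda_a:=\{\max_{j\neq a}\frac2n|\epsilon_a'X^a_j|\le\lambda_0+B\mu_0\}$.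 *)

theory Defs
  imports Complex_Main
begin

text \<open>Conventions: variables are indexed by 1..p, observations by 1..n.
  Vectors in R^p are functions nat => real (only entries 1..p matter),
  vectors in R^n are functions nat => real (entries 1..n),
  the full n x p data matrix is X :: nat => nat => real, X i j = observation i of variable j.\<close>

definition l1norm :: "nat \<Rightarrow> (nat \<Rightarrow> real) \<Rightarrow> real" where
  "l1norm p v = (\<Sum>j=1..p. \<bar>v j\<bar>)"

definition sqnorm :: "nat \<Rightarrow> (nat \<Rightarrow> real) \<Rightarrow> real" where
  "sqnorm n v = (\<Sum>i=1..n. (v i)\<^sup>2)"

definition vrestr :: "nat set \<Rightarrow> (nat \<Rightarrow> real) \<Rightarrow> (nat \<Rightarrow> real)" where
  "vrestr S \<theta> = (\<lambda>j. if j \<in> S then \<theta> j else 0)"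

definition Xcol :: "(nat \<Rightarrow> nat \<Rightarrow> real) \<Rightarrow> nat \<Rightarrow> (nat \<Rightarrow> real)" where
  "Xcol X a = (\<lambda>i. X i a)"

definition Xminus :: "(nat \<Rightarrow> nat \<Rightarrow> real) \<Rightarrow> nat \<Rightarrow> (nat \<Rightarrow> nat \<Rightarrow> real)" where
  "Xminus X a = (\<lambda>i j. if j = a then 0 else X i j)"

definition mvmult :: "nat \<Rightarrow> (nat \<Rightarrow> nat \<Rightarrow> real) \<Rightarrow> (nat \<Rightarrow> real) \<Rightarrow> (nat \<Rightarrow> real)" where
  "mvmult p M \<theta> = (\<lambda>i. \<Sum>j=1..p. M i j * \<theta> j)"

text \<open>Edges of the local neighbourhood graph are stored as pairs (i,j) with i<j.
  Row set of D^a: edges whose row e_i - e_j has a-th entry 0, i.e. a not in {i,j}.\<close>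
definition Drows :: "(nat \<times> nat) set \<Rightarrow> nat \<Rightarrow> (nat \<times> nat) set" where
  "Drows E a = {(i,j) \<in> E. i \<noteq> a \<and> j \<noteq> a}"

definition Dentry :: "nat \<times> nat \<Rightarrow> nat \<Rightarrow> real" where
  "Dentry e k = (if k = fst e then 1 else if k = snd e then -1 else 0)"

definition Dl1 :: "nat \<Rightarrow> (nat \<times> nat) set \<Rightarrow> nat \<Rightarrow> (nat \<Rightarrow> real) \<Rightarrow> real" where
  "Dl1 p E a \<theta> = (\<Sum>e\<in>Drows E a. \<bar>\<Sum>k=1..p. Dentry e k * \<theta> k\<bar>)"

definition objective :: "nat \<Rightarrow> nat \<Rightarrow> (nat \<Rightarrow> nat \<Rightarrow> real) \<Rightarrow> nat \<Rightarrow> (nat \<times> nat) set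
    \<Rightarrow> real \<Rightarrow> real \<Rightarrow> (nat \<Rightarrow> real) \<Rightarrow> real" where
  "objective n p X a E lam mu \<theta> =
     (1 / real n) * sqnorm n (\<lambda>i. Xcol X a i - mvmult p (Xminus X a) \<theta> i)
     + lam * l1norm p \<theta> + mu * Dl1 p E a \<theta>"

end

theory Submission
  imports Defs
begin

(* The argument is the standard "basic inequality" route of lasso theory:
   (1) since the estimator minimises the objective, comparing its value with the
       value at the true coefficients and expanding the squared residual under the
       linear model bounds the prediction error by a cross term with the noise plus
       the differences of the two penalties;
   (2) the cross term is controlled by Hoelder's inequality: on the event Lambda_a
       every column correlation is at most lam0 + B mu0, so the cross term is at most
       (lam0 + B mu0) times the l1 distance to the truth;
   (3) the l1 penalty difference splits along the support S0 of the truth, and the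
       fusion penalty is B-Lipschitz in l1, since every column of D^a has at most B
       entries of absolute value one;
   (4) a purely arithmetic lemma combines these bounds with lam >= 2 lam0 and
       mu >= 2 mu0. *)

lemma sqnorm_diff:
  "sqnorm n (\<lambda>i. u i - v i) = sqnorm n u - 2 * (\<Sum>i=1..n. u i * v i) + sqnorm n v"
proof -
  have "sqnorm n (\<lambda>i. u i - v i) = (\<Sum>i=1..n. (u i)\<^sup>2 - 2 * (u i * v i) + (v i)\<^sup>2)"
    unfolding sqnorm_def by (intro sum.cong refl) (simp add: power2_diff)
  then show ?thesis
    unfolding sqnorm_def by (simp add: sum.distrib sum_subtractf sum_distrib_left)
qed

lemma mvmult_diff:
  "mvmult p M \<theta> i - mvmult p M \<theta>' i = mvmult p M (\<lambda>j. \<theta> j - \<theta>' j) i"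
  unfolding mvmult_def by (simp add: sum_subtractf right_diff_distrib)

lemma l1norm_nonneg: "0 \<le> l1norm p v"
  unfolding l1norm_def by (simp add: sum_nonneg)

lemma basic_inequality:
  assumes model: "\<forall>i\<in>{1..n}. Xcol X a i = mvmult p (Xminus X a) \<theta>0 i + \<epsilon> i"
    and opt: "objective n p X a E lam mu \<theta>hat \<le> objective n p X a E lam mu \<theta>0"
  defines "Md \<equiv> mvmult p (Xminus X a) (\<lambda>j. \<theta>hat j - \<theta>0 j)"
  shows "1 / real n * sqnorm n Md
           \<le> 2 / real n * (\<Sum>i=1..n. \<epsilon> i * Md i)
             + lam * (l1norm p \<theta>0 - l1norm p \<theta>hat) + mu * (Dl1 p E a \<theta>0 - Dl1 p E a \<theta>hat)"
proof -
  let ?M = "Xminus X a"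
  have res0: "sqnorm n (\<lambda>i. Xcol X a i - mvmult p ?M \<theta>0 i) = sqnorm n \<epsilon>"
    unfolding sqnorm_def using model by (intro sum.cong) auto
  have "sqnorm n (\<lambda>i. Xcol X a i - mvmult p ?M \<theta>hat i) = sqnorm n (\<lambda>i. \<epsilon> i - Md i)"
    unfolding sqnorm_def Md_def using model mvmult_diff[where p=p and M="?M" and \<theta>=\<theta>hat and \<theta>'=\<theta>0]
    by (intro sum.cong refl) (metis diff_diff_eq2 add.commute)
  then have reshat: "sqnorm n (\<lambda>i. Xcol X a i - mvmult p ?M \<theta>hat i)
      = sqnorm n \<epsilon> - 2 * (\<Sum>i=1..n. \<epsilon> i * Md i) + sqnorm n Md"
    by (simp add: sqnorm_diff)
  from opt show ?thesis
    unfolding objective_def res0 reshat by (simp add: algebra_simps)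
qed

text \<open>Hoelder's inequality between l-infinity and l1: if every column of M has
  (scaled) correlation at most c with the noise, then so has every M d, up to the
  factor l1norm d.\<close>
lemma cross_term_bound:
  fixes M :: "nat \<Rightarrow> nat \<Rightarrow> real"
  assumes \<kappa>: "0 \<le> \<kappa>"
    and columns: "\<forall>j\<in>{1..p}. \<kappa> * \<bar>\<Sum>i=1..n. \<epsilon> i * M i j\<bar> \<le> c"
  shows "\<kappa> * \<bar>\<Sum>i=1..n. \<epsilon> i * mvmult p M d i\<bar> \<le> c * l1norm p d"
proof -
  have swap: "(\<Sum>i=1..n. \<epsilon> i * mvmult p M d i) = (\<Sum>j=1..p. d j * (\<Sum>i=1..n. \<epsilon> i * M i j))"
    unfolding mvmult_def
    by (simp add: sum_distrib_left sum_distrib_right mult_ac) (rule sum.swap)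
  have "\<kappa> * \<bar>\<Sum>i=1..n. \<epsilon> i * mvmult p M d i\<bar>
      \<le> \<kappa> * (\<Sum>j=1..p. \<bar>d j\<bar> * \<bar>\<Sum>i=1..n. \<epsilon> i * M i j\<bar>)"
    unfolding swap using \<kappa>
    by (intro mult_left_mono) (auto simp: abs_mult intro: order_trans[OF sum_abs])
  also have "\<dots> = (\<Sum>j=1..p. \<bar>d j\<bar> * (\<kappa> * \<bar>\<Sum>i=1..n. \<epsilon> i * M i j\<bar>))"
    by (simp add: sum_distrib_left mult_ac)
  also have "\<dots> \<le> (\<Sum>j=1..p. \<bar>d j\<bar> * c)"
    using columns by (intro sum_mono mult_left_mono) auto
  also have "\<dots> = c * l1norm p d"
    unfolding l1norm_def by (simp add: sum_distrib_left mult_ac)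
  finally show ?thesis .
qed

lemma l1norm_support_split:
  assumes support: "\<forall>j\<in>{1..p} - S. \<theta>0 j = 0"
  shows "l1norm p (\<lambda>j. \<theta> j - \<theta>0 j)
           = l1norm p (\<lambda>j. vrestr S \<theta> j - vrestr S \<theta>0 j) + l1norm p (vrestr ({1..p} - S) \<theta>)"
  unfolding l1norm_def sum.distrib[symmetric]
  using support by (intro sum.cong refl) (auto simp: vrestr_def)

lemma l1norm_support_decrease:
  assumes support: "\<forall>j\<in>{1..p} - S. \<theta>0 j = 0"
  shows "l1norm p \<theta>0 - l1norm p \<theta>
           \<le> l1norm p (\<lambda>j. vrestr S \<theta> j - vrestr S \<theta>0 j) - l1norm p (vrestr ({1..p} - S) \<theta>)"
  unfolding l1norm_def sum_subtractf[symmetric]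
  using support by (intro sum_mono) (auto simp: vrestr_def)

text \<open>The fusion penalty is B-Lipschitz with respect to the l1 norm when every column
  of the difference matrix D^a has at most B nonzero entries (all of modulus one).\<close>
lemma Dl1_lipschitz:
  assumes finE: "finite E"
    and B_bound: "\<forall>k\<in>{1..p}. card {e \<in> Drows E a. Dentry e k \<noteq> 0} \<le> B"
  shows "Dl1 p E a u - Dl1 p E a v \<le> real B * l1norm p (\<lambda>j. v j - u j)"
proof -
  have finD: "finite (Drows E a)"
    using finE unfolding Drows_def by (rule finite_subset[rotated]) auto
  have row: "\<bar>\<Sum>k=1..p. Dentry e k * u k\<bar> - \<bar>\<Sum>k=1..p. Dentry e k * v k\<bar>
      \<le> (\<Sum>k=1..p. \<bar>Dentry e k\<bar> * \<bar>v k - u k\<bar>)" for e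
  proof -
    have "\<bar>\<Sum>k=1..p. Dentry e k * u k\<bar> - \<bar>\<Sum>k=1..p. Dentry e k * v k\<bar>
        \<le> \<bar>\<Sum>k=1..p. Dentry e k * (v k - u k)\<bar>"
      by (simp add: sum_subtractf right_diff_distrib)
    also have "\<dots> \<le> (\<Sum>k=1..p. \<bar>Dentry e k\<bar> * \<bar>v k - u k\<bar>)"
      by (rule order_trans[OF sum_abs]) (simp add: abs_mult)
    finally show ?thesis .
  qed
  have column: "(\<Sum>e\<in>Drows E a. \<bar>Dentry e k\<bar>) \<le> real B" if k: "k \<in> {1..p}" for k
  proof -
    have "(\<Sum>e\<in>Drows E a. \<bar>Dentry e k\<bar>) = (\<Sum>e\<in>{e \<in> Drows E a. Dentry e k \<noteq> 0}. \<bar>Dentry e k\<bar>)"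
      using finD by (intro sum.mono_neutral_right) auto
    also have "\<dots> \<le> real (card {e \<in> Drows E a. Dentry e k \<noteq> 0})"
      using sum_mono[of _ "\<lambda>e. \<bar>Dentry e k\<bar>" "\<lambda>_. 1"] by (force simp: Dentry_def)
    also have "\<dots> \<le> real B" using B_bound k by auto
    finally show ?thesis .
  qed
  have "Dl1 p E a u - Dl1 p E a v
      \<le> (\<Sum>e\<in>Drows E a. \<Sum>k=1..p. \<bar>Dentry e k\<bar> * \<bar>v k - u k\<bar>)"
    unfolding Dl1_def sum_subtractf[symmetric] by (intro sum_mono row)
  also have "\<dots> = (\<Sum>k=1..p. (\<Sum>e\<in>Drows E a. \<bar>Dentry e k\<bar>) * \<bar>v k - u k\<bar>)"
    by (subst sum.swap) (simp add: sum_distrib_right)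
  also have "\<dots> \<le> (\<Sum>k=1..p. real B * \<bar>v k - u k\<bar>)"
    using column by (intro sum_mono mult_right_mono) auto
  also have "\<dots> = real B * l1norm p (\<lambda>j. v j - u j)"
    unfolding l1norm_def by (simp add: sum_distrib_left)
  finally show ?thesis .
qed

text \<open>The arithmetic core: Q is the doubled prediction error, C the scaled cross term,
  dS and hS the error on the support and the mass off the support.\<close>
lemma combine_bounds:
  fixes Q C dS hS dl1 dD lam mu lam0 mu0 B :: real
  assumes basic: "Q / 2 \<le> C + lam * dl1 + mu * dD"
    and cross: "C \<le> (lam0 + B * mu0) * (dS + hS)"
    and dl1: "dl1 \<le> dS - hS"
    and dD: "dD \<le> B * (dS + hS)"
    and lam: "2 * lam0 \<le> lam" and mu: "2 * mu0 \<le> mu"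
    and pos: "0 < lam0" "0 < mu0" "0 \<le> B" "0 \<le> dS" "0 \<le> hS"
  shows "Q + (lam - 3 * B * mu) * hS \<le> (3 * lam + 5 * B * mu) * dS"
proof -
  have "lam0 + B * mu0 \<le> (lam + B * mu) / 2"
    using lam mult_left_mono[OF mu, of B] pos by simp
  then have "C \<le> (lam + B * mu) / 2 * (dS + hS)"
    using cross pos by (meson add_nonneg_nonneg mult_right_mono order_trans)
  moreover have "lam * dl1 \<le> lam * (dS - hS)"
    using dl1 lam pos by (intro mult_left_mono) auto
  moreover have "mu * dD \<le> mu * (B * (dS + hS))"
    using dD mu pos by (intro mult_left_mono) auto
  moreover have "0 \<le> B * mu * dS" using pos mu by simp
  ultimately show ?thesis
    using basic by (simp add: algebra_simps)
qed

theorem mainTheorem12: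
  fixes n p a B :: nat
    and X :: "nat \<Rightarrow> nat \<Rightarrow> real"
    and \<theta>0 \<epsilon> \<theta>hat :: "nat \<Rightarrow> real"
    and E :: "(nat \<times> nat) set"
    and lam mu lam0 mu0 :: real
  assumes n_pos: "0 < n"
    and a_in: "a \<in> {1..p}"
    and edges: "\<forall>(i,j)\<in>E. i < j \<and> i \<in> {1..p} \<and> j \<in> {1..p}"
    and B_bound: "\<forall>k\<in>{1..p}. card {e \<in> Drows E a. Dentry e k \<noteq> 0} \<le> B"
    and model: "\<forall>i\<in>{1..n}. Xcol X a i = mvmult p (Xminus X a) \<theta>0 i + \<epsilon> i"
    and minimizer: "\<forall>\<theta>. objective n p X a E lam mu \<theta>hat \<le> objective n p X a E lam mu \<theta>"
    and pos0: "0 < lam0" "0 < mu0"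
    and Lambda_a: "\<forall>j\<in>{1..p} - {a}.
        2 / real n * \<bar>\<Sum>i=1..n. \<epsilon> i * Xminus X a i j\<bar> \<le> lam0 + real B * mu0"
    and lam: "lam \<ge> 2 * lam0"
    and mu: "mu \<ge> 2 * mu0"
  defines "S0 \<equiv> {j \<in> {1..p}. \<theta>0 j \<noteq> 0}"
  shows "2 / real n * sqnorm n (mvmult p (Xminus X a) (\<lambda>j. \<theta>hat j - \<theta>0 j))
           + (lam - 3 * real B * mu) * l1norm p (vrestr ({1..p} - S0) \<theta>hat)
         \<le> (3 * lam + 5 * real B * mu) * l1norm p (\<lambda>j. vrestr S0 \<theta>hat j - vrestr S0 \<theta>0 j)"
proof -
  define Md where "Md = mvmult p (Xminus X a) (\<lambda>j. \<theta>hat j - \<theta>0 j)"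
  have support: "\<forall>j\<in>{1..p} - S0. \<theta>0 j = 0" unfolding S0_def by auto
  have finE: "finite E"
    using edges by (intro finite_subset[of E "{1..p} \<times> {1..p}"]) auto
  \<comment> \<open>the zeroed column a is trivially within the bound of the event Lambda_a\<close>
  have columns: "\<forall>j\<in>{1..p}. 2 / real n * \<bar>\<Sum>i=1..n. \<epsilon> i * Xminus X a i j\<bar> \<le> lam0 + real B * mu0"
  proof
    fix j assume "j \<in> {1..p}"
    then show "2 / real n * \<bar>\<Sum>i=1..n. \<epsilon> i * Xminus X a i j\<bar> \<le> lam0 + real B * mu0"
      using Lambda_a pos0 by (cases "j = a") (auto simp: Xminus_def)
  qed
  have basic: "1 / real n * sqnorm n Md \<le> 2 / real n * (\<Sum>i=1..n. \<epsilon> i * Md i)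
      + lam * (l1norm p \<theta>0 - l1norm p \<theta>hat) + mu * (Dl1 p E a \<theta>0 - Dl1 p E a \<theta>hat)"
    using basic_inequality[OF model] minimizer unfolding Md_def by blast
  have "2 / real n * \<bar>\<Sum>i=1..n. \<epsilon> i * Md i\<bar> \<le> (lam0 + real B * mu0) * l1norm p (\<lambda>j. \<theta>hat j - \<theta>0 j)"
    unfolding Md_def by (rule cross_term_bound[OF _ columns]) simp
  moreover have "2 / real n * (\<Sum>i=1..n. \<epsilon> i * Md i) \<le> 2 / real n * \<bar>\<Sum>i=1..n. \<epsilon> i * Md i\<bar>"
    by (intro mult_left_mono) simp_all
  ultimately have cross: "2 / real n * (\<Sum>i=1..n. \<epsilon> i * Md i)
      \<le> (lam0 + real B * mu0) * l1norm p (\<lambda>j. \<theta>hat j - \<theta>0 j)"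
    by linarith
  show ?thesis
    unfolding Md_def[symmetric]
  proof (rule combine_bounds[OF _ cross[unfolded l1norm_support_split[OF support]]
        l1norm_support_decrease[OF support]])
    show "2 / real n * sqnorm n Md / 2 \<le> 2 / real n * (\<Sum>i=1..n. \<epsilon> i * Md i)
        + lam * (l1norm p \<theta>0 - l1norm p \<theta>hat) + mu * (Dl1 p E a \<theta>0 - Dl1 p E a \<theta>hat)"
      using basic by simp
    show "Dl1 p E a \<theta>0 - Dl1 p E a \<theta>hat \<le> real B * (l1norm p (\<lambda>j. vrestr S0 \<theta>hat j - vrestr S0 \<theta>0 j)
        + l1norm p (vrestr ({1..p} - S0) \<theta>hat))"
      using Dl1_lipschitz[OF finE B_bound] l1norm_support_split[OF support] by metis
  qed (use lam mu pos0 l1norm_nonneg in auto)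
qed

end
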